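(* A nonnegative matrix $M\in\mathbb{R}_+^{p\times q}$ is a slack matrix of a polyhedral cone if and only if $$\{Mz : z\in\mathbb{R}_+^q\}=\{Mz: z\in\mathbb{R}^q\}\cap\mathbb{R}_+^p,$$ i.e., the cone spanned by the columns of $M$ coincides with the set of nonnegative vectors in the column span of $M$.
   Context: A matrix $S\in\mathbb{R}^{p\times q}$ is a slack matrix of a polyhedral cone $K\subseteq\mathbb{R}^n$ if there are matrices $A\in\mathbb{R}^{p\times n}$ and $B\in\mathbb{R}^{n\times q}$ with $K=\{x\in\mathbb{R}^n: x^TB\ge 0\}=\{y^TA: y\in\mathbb{R}_+^p\}$ and $S=AB$. A matrix is a slack matrix of a polyhedral cone if it is a slack matrix of some polyhedral cone. *)

theory Defs
  imports "Jordan_Normal_Form.Matrix"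
begin

definition nonneg_vec :: "real vec \<Rightarrow> bool" where
  "nonneg_vec v \<longleftrightarrow> (\<forall>i < dim_vec v. v $ i \<ge> 0)"

text \<open>S (p x q) is a slack matrix of the polyhedral cone K in R^n: there are A (p x n) and
 B (n x q) with K = {x. x^T B \<ge> 0} = {y^T A. y \<ge> 0} and S = A B.
 Row vectors x^T B and y^T A are represented by the column vectors B^T x and A^T y.\<close>

definition slack_matrix_of_cone :: "real mat \<Rightarrow> nat \<Rightarrow> real vec set \<Rightarrow> bool" where
  "slack_matrix_of_cone S n K \<longleftrightarrow>
     (\<exists>A B. A \<in> carrier_mat (dim_row S) n \<and> B \<in> carrier_mat n (dim_col S) \<and>
        K = {x \<in> carrier_vec n. nonneg_vec (transpose_mat B *\<^sub>v x)} \<and>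
        K = {transpose_mat A *\<^sub>v y | y. y \<in> carrier_vec (dim_row S) \<and> nonneg_vec y} \<and>
        S = A * B)"

definition is_slack_matrix_of_polyhedral_cone :: "real mat \<Rightarrow> bool" where
  "is_slack_matrix_of_polyhedral_cone S \<longleftrightarrow> (\<exists>n K. slack_matrix_of_cone S n K)"

end

theory Submission
  imports Defs
begin

text \<open>Both directions rest on Farkas' lemma.
If \<open>M = A B\<close> is a slack matrix of \<open>K\<close> and \<open>v = M z \<ge> 0\<close>, then either \<open>B z\<close> is a
nonnegative combination of the columns of \<open>B\<close>, which gives \<open>v = M z'\<close> with \<open>z' \<ge> 0\<close>, or
some \<open>u\<close> with \<open>B\<^sup>T u \<ge> 0\<close> has \<open>\<langle>B z, u\<rangle> < 0\<close>; but then \<open>u \<in> K\<close>, so \<open>u = A\<^sup>T y\<close>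
with \<open>y \<ge> 0\<close> and \<open>\<langle>B z, u\<rangle> = \<langle>y, v\<rangle> \<ge> 0\<close>.
Conversely, take a rank factorization \<open>M = A B\<close> (\<open>A\<close> injective, \<open>B\<close> surjective) and
\<open>K = {x. B\<^sup>T x \<ge> 0}\<close>. Since \<open>M \<ge> 0\<close>, \<open>K\<close> contains the cone spanned by the rows of \<open>A\<close>.
A point \<open>x \<in> K\<close> outside that cone is separated by some \<open>w\<close> with \<open>A w \<ge> 0\<close>; writing
\<open>w = B z\<close>, the hypothesis gives \<open>M z = M z'\<close> with \<open>z' \<ge> 0\<close>, injectivity of \<open>A\<close> gives
\<open>w = B z'\<close>, and \<open>\<langle>x, w\<rangle> = \<langle>B\<^sup>T x, z'\<rangle> \<ge> 0\<close>, a contradiction.\<close>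

text \<open>Until the final translation to matrices, a vector of \<open>\<real>\<^sup>n\<close> is a function \<open>nat \<Rightarrow> real\<close>
  read on \<open>{..<n}\<close>, and a list of \<open>m\<close> such vectors is \<open>a :: nat \<Rightarrow> nat \<Rightarrow> real\<close>.\<close>

definition dot :: "nat \<Rightarrow> (nat \<Rightarrow> real) \<Rightarrow> (nat \<Rightarrow> real) \<Rightarrow> real" where
  "dot n x y = (\<Sum>k<n. x k * y k)"

lemma dot_commute: "dot n x y = dot n y x"
  unfolding dot_def by (simp add: mult.commute)

lemma dot_diff_left: "dot n (\<lambda>k. x k - t * y k) z = dot n x z - t * dot n y z"
  unfolding dot_def by (simp add: algebra_simps sum_subtractf sum_distrib_left)

lemma dot_diff_right: "dot n z (\<lambda>k. x k - t * y k) = dot n z x - t * dot n z y"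
  unfolding dot_def by (simp add: algebra_simps sum_subtractf sum_distrib_left)

definition proj_hyperplane ::
  "nat \<Rightarrow> (nat \<Rightarrow> real) \<Rightarrow> (nat \<Rightarrow> real) \<Rightarrow> (nat \<Rightarrow> real) \<Rightarrow> nat \<Rightarrow> real" where
  "proj_hyperplane n c w x = (\<lambda>k. x k - (dot n x w / dot n c w) * c k)"

lemma dot_proj_hyperplane_adjoint:
  "dot n (proj_hyperplane n c w x) y = dot n x (proj_hyperplane n w c y)"
  unfolding proj_hyperplane_def dot_diff_left dot_diff_right
  by (simp add: dot_commute[of n c w] dot_commute[of n y c])

lemma dot_proj_hyperplane_normal:
  "dot n c w \<noteq> 0 \<Longrightarrow> dot n (proj_hyperplane n c w x) w = 0"
  unfolding proj_hyperplane_def dot_diff_left by simp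

definition in_row_cone :: "nat \<Rightarrow> nat \<Rightarrow> (nat \<Rightarrow> nat \<Rightarrow> real) \<Rightarrow> (nat \<Rightarrow> real) \<Rightarrow> bool" where
  "in_row_cone m n a b \<longleftrightarrow> (\<exists>l. (\<forall>i<m. 0 \<le> l i) \<and> (\<forall>k<n. b k = (\<Sum>i<m. l i * a i k)))"

definition has_separating_vector ::
  "nat \<Rightarrow> nat \<Rightarrow> (nat \<Rightarrow> nat \<Rightarrow> real) \<Rightarrow> (nat \<Rightarrow> real) \<Rightarrow> bool" where
  "has_separating_vector m n a b \<longleftrightarrow> (\<exists>w. (\<forall>i<m. 0 \<le> dot n (a i) w) \<and> dot n b w < 0)"

lemma in_row_cone_of_projection:
  assumes w: "\<forall>i<m. 0 \<le> dot n (a i) w" "dot n b w < 0" "dot n (a m) w < 0"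
    and proj: "in_row_cone m n (\<lambda>i. proj_hyperplane n (a m) w (a i)) (proj_hyperplane n (a m) w b)"
  shows "in_row_cone (Suc m) n a b"
proof -
  define c where "c = dot n (a m) w"
  obtain l where l: "\<forall>i<m. 0 \<le> l i"
    and comb: "\<forall>k<n. proj_hyperplane n (a m) w b k = (\<Sum>i<m. l i * proj_hyperplane n (a m) w (a i) k)"
    using proj unfolding in_row_cone_def by blast
  define S where "S = (\<Sum>i<m. l i * dot n (a i) w)"
  have "0 \<le> S" unfolding S_def using l w(1) by (auto intro!: sum_nonneg)
  define L where "L = l(m := (dot n b w - S) / c)"
  have "0 \<le> L m" unfolding L_def c_def using \<open>0 \<le> S\<close> w by (simp add: divide_nonpos_neg)
  then have "\<forall>i<Suc m. 0 \<le> L i" using l by (auto simp: L_def less_Suc_eq)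
  moreover have "b k = (\<Sum>i<Suc m. L i * a i k)" if k: "k < n" for k
  proof -
    have "b k = proj_hyperplane n (a m) w b k + (dot n b w / c) * a m k"
      by (simp add: proj_hyperplane_def c_def)
    also have "proj_hyperplane n (a m) w b k = (\<Sum>i<m. l i * a i k) - S / c * a m k"
      using comb k unfolding proj_hyperplane_def S_def c_def
      by (simp add: algebra_simps sum_subtractf sum_distrib_left sum_distrib_right sum_divide_distrib)
    finally have "b k = (\<Sum>i<m. l i * a i k) + ((dot n b w - S) / c) * a m k"
      by (simp add: diff_divide_distrib algebra_simps)
    then show ?thesis by (simp add: L_def)
  qed
  ultimately show ?thesis unfolding in_row_cone_def by blast
qed

lemma has_separating_vector_of_projection:
  assumes c: "dot n (a m) w \<noteq> 0"
    and proj: "has_separating_vector m n (\<lambda>i. proj_hyperplane n (a m) w (a i))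
      (proj_hyperplane n (a m) w b)"
  shows "has_separating_vector (Suc m) n a b"
proof -
  obtain u where u: "\<forall>i<m. 0 \<le> dot n (proj_hyperplane n (a m) w (a i)) u"
    "dot n (proj_hyperplane n (a m) w b) u < 0"
    using proj unfolding has_separating_vector_def by blast
  define u' where "u' = proj_hyperplane n w (a m) u"
  have "dot n (a m) u' = 0"
    using dot_proj_hyperplane_normal[of n w "a m" u] c
    unfolding u'_def by (metis dot_commute)
  then have "\<forall>i<Suc m. 0 \<le> dot n (a i) u'"
    using u(1) by (auto simp: less_Suc_eq u'_def dot_proj_hyperplane_adjoint[symmetric])
  moreover have "dot n b u' < 0"
    using u(2) by (simp add: u'_def dot_proj_hyperplane_adjoint[symmetric])
  ultimately show ?thesis unfolding has_separating_vector_def by blast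
qed

text \<open>Induction on the number of rows: if a vector separating \<open>b\<close> from the first \<open>m\<close> rows
  fails on row \<open>m\<close>, project everything along that row onto the hyperplane orthogonal to the
  vector and use the two lemmas above.\<close>

lemma farkas: "in_row_cone m n a b \<or> has_separating_vector m n a b"
proof (induction m arbitrary: a b)
  case 0
  have "dot n b (\<lambda>k. - b k) < 0" if "b k0 \<noteq> 0" "k0 < n" for k0
  proof -
    have "0 < (\<Sum>k<n. b k * b k)"
      by (rule sum_pos2[of _ k0]) (use that in \<open>auto simp: zero_less_mult_iff\<close>)
    then show ?thesis unfolding dot_def by (simp add: sum_negf)
  qed
  then show ?case unfolding in_row_cone_def has_separating_vector_def by force
next
  case (Suc m)
  from Suc.IH[of a b] show ?case
  proof
    assume "in_row_cone m n a b"
    then obtain l where "\<forall>i<m. 0 \<le> l i" "\<forall>k<n. b k = (\<Sum>i<m. l i * a i k)"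
      unfolding in_row_cone_def by blast
    then show ?thesis unfolding in_row_cone_def
      by (intro disjI1 exI[of _ "l(m := 0)"]) (auto simp: less_Suc_eq)
  next
    assume "has_separating_vector m n a b"
    then obtain w where w: "\<forall>i<m. 0 \<le> dot n (a i) w" "dot n b w < 0"
      unfolding has_separating_vector_def by blast
    show ?thesis
    proof (cases "0 \<le> dot n (a m) w")
      case True
      then show ?thesis using w unfolding has_separating_vector_def
        by (auto simp: less_Suc_eq intro!: exI[of _ w])
    next
      case False
      then have c: "dot n (a m) w < 0" by simp
      from Suc.IH[of "\<lambda>i. proj_hyperplane n (a m) w (a i)" "proj_hyperplane n (a m) w b"]
      show ?thesis
      proof
        assume "in_row_cone m n
          (\<lambda>i. proj_hyperplane n (a m) w (a i)) (proj_hyperplane n (a m) w b)"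
        then show ?thesis using in_row_cone_of_projection[OF w c] by simp
      next
        assume "has_separating_vector m n
          (\<lambda>i. proj_hyperplane n (a m) w (a i)) (proj_hyperplane n (a m) w b)"
        then show ?thesis using has_separating_vector_of_projection[of n a m w b] c by simp
      qed
    qed
  qed
qed

text \<open>The linear span of the rows of \<open>B\<close> is the cone generated by the rows and minus their sum.\<close>

lemma annihilator_outside_row_span:
  fixes q r :: nat and B :: "nat \<Rightarrow> nat \<Rightarrow> real" and v :: "nat \<Rightarrow> real"
  assumes "\<not> (\<exists>c. \<forall>j<q. v j = (\<Sum>k<r. c k * B k j))"
  shows "\<exists>z. (\<forall>k<r. dot q (B k) z = 0) \<and> dot q v z = 1"
proof -
  define a where "a = (\<lambda>i j. if i < r then B i j else - (\<Sum>k<r. B k j))"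
  have "\<not> in_row_cone (Suc r) q a v"
  proof
    assume "in_row_cone (Suc r) q a v"
    then obtain l where l: "\<forall>j<q. v j = (\<Sum>i<Suc r. l i * a i j)" unfolding in_row_cone_def by blast
    have "(\<Sum>i<Suc r. l i * a i j) = (\<Sum>k<r. (l k - l r) * B k j)" for j
      by (simp add: a_def left_diff_distrib sum_subtractf sum_distrib_left)
    with assms l show False by auto
  qed
  then obtain w where w: "\<forall>i<Suc r. 0 \<le> dot q (a i) w" "dot q v w < 0"
    using farkas[of "Suc r" q a v] unfolding has_separating_vector_def by blast
  have rows: "0 \<le> dot q (B k) w" if "k < r" for k
    using w(1)[rule_format, of k] that by (simp add: a_def)
  have "dot q (a r) w = - (\<Sum>k<r. dot q (B k) w)"
    unfolding a_def dot_def by (simp add: sum_negf sum_distrib_right sum.swap[of _ "{..<r}"])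
  moreover have "0 \<le> dot q (a r) w" using w(1) by simp
  moreover have "0 \<le> (\<Sum>k<r. dot q (B k) w)" using rows by (auto intro: sum_nonneg)
  ultimately have "(\<Sum>k<r. dot q (B k) w) = 0" by linarith
  then have "\<forall>k<r. dot q (B k) w = 0" using rows by (subst (asm) sum_nonneg_eq_0_iff) auto
  moreover have "dot q x (\<lambda>j. w j / dot q v w) = dot q x w / dot q v w" for x
    unfolding dot_def by (simp add: sum_divide_distrib)
  ultimately show ?thesis using w(2) by (intro exI[of _ "\<lambda>j. w j / dot q v w"]) simp
qed

definition is_rank_factorization :: "nat \<Rightarrow> nat \<Rightarrow> nat \<Rightarrow>
    (nat \<Rightarrow> nat \<Rightarrow> real) \<Rightarrow> (nat \<Rightarrow> nat \<Rightarrow> real) \<Rightarrow> (nat \<Rightarrow> nat \<Rightarrow> real) \<Rightarrow> bool"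
  where
  "is_rank_factorization p q r M A B \<longleftrightarrow>
     (\<forall>i<p. \<forall>j<q. M i j = (\<Sum>k<r. A i k * B k j)) \<and>
     (\<forall>w. (\<forall>i<p. dot r (A i) w = 0) \<longrightarrow> (\<forall>k<r. w k = 0)) \<and>
     (\<forall>w. \<exists>z. \<forall>k<r. dot q (B k) z = w k)"

lemma is_rank_factorization_add_row_in_span:
  assumes "is_rank_factorization p q r M A B" "\<forall>j<q. M p j = (\<Sum>k<r. c k * B k j)"
  shows "is_rank_factorization (Suc p) q r M (A(p := c)) B"
  using assms unfolding is_rank_factorization_def by (auto simp: less_Suc_eq)

lemma is_rank_factorization_add_row_outside_span:
  assumes rf: "is_rank_factorization p q r M A B"
    and z1: "\<forall>k<r. dot q (B k) z1 = 0" "dot q (M p) z1 = 1"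
  defines "A' \<equiv> \<lambda>i k. if k = r then (if i = p then 1 else 0) else if i = p then 0 else A i k"
    and "B' \<equiv> \<lambda>k j. if k = r then M p j else B k j"
  shows "is_rank_factorization (Suc p) q (Suc r) M A' B'"
proof -
  have fac: "\<forall>i<p. \<forall>j<q. M i j = (\<Sum>k<r. A i k * B k j)"
    and inj: "\<forall>w. (\<forall>i<p. dot r (A i) w = 0) \<longrightarrow> (\<forall>k<r. w k = 0)"
    and surj: "\<forall>w. \<exists>z. \<forall>k<r. dot q (B k) z = w k"
    using rf unfolding is_rank_factorization_def by blast+
  have "\<forall>i<Suc p. \<forall>j<q. M i j = (\<Sum>k<Suc r. A' i k * B' k j)"
    using fac by (auto simp: A'_def B'_def less_Suc_eq)
  moreover have "\<forall>k<Suc r. w k = 0" if w: "\<forall>i<Suc p. dot (Suc r) (A' i) w = 0" for w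
  proof -
    have "w r = 0" using w[rule_format, of p] by (simp add: A'_def dot_def)
    moreover have "dot r (A i) w = 0" if "i < p" for i
      using w[rule_format, of i] that by (simp add: A'_def dot_def)
    ultimately show ?thesis using inj by (auto simp: less_Suc_eq)
  qed
  moreover have "\<exists>z. \<forall>k<Suc r. dot q (B' k) z = w k" for w
  proof -
    obtain z0 where z0: "\<forall>k<r. dot q (B k) z0 = w k" using surj by blast
    define t where "t = w r - dot q (M p) z0"
    have "dot q x (\<lambda>j. z0 j + t * z1 j) = dot q x z0 + t * dot q x z1" for x
      unfolding dot_def by (simp add: algebra_simps sum.distrib sum_distrib_left)
    then have "\<forall>k<Suc r. dot q (B' k) (\<lambda>j. z0 j + t * z1 j) = w k"
      using z0 z1 by (simp add: B'_def t_def less_Suc_eq)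
    then show ?thesis by blast
  qed
  ultimately show ?thesis unfolding is_rank_factorization_def by blast
qed

lemma rank_factorization_exists: "\<exists>r A B. is_rank_factorization p q r M A B"
proof (induction p)
  case 0
  show ?case by (rule exI[of _ 0]) (simp add: is_rank_factorization_def)
next
  case (Suc p)
  then obtain r A B where rf: "is_rank_factorization p q r M A B" by blast
  show ?case
  proof (cases "\<exists>c. \<forall>j<q. M p j = (\<Sum>k<r. c k * B k j)")
    case True
    then show ?thesis using is_rank_factorization_add_row_in_span[OF rf] by blast
  next
    case False
    then obtain z where "\<forall>k<r. dot q (B k) z = 0" "dot q (M p) z = 1"
      using annihilator_outside_row_span by blast
    then show ?thesis using is_rank_factorization_add_row_outside_span[OF rf] by blast
  qed
qed

lemma farkas_mat:
  fixes A :: "real mat" and b :: "real vec"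
  assumes A: "A \<in> carrier_mat m n" and b: "b \<in> carrier_vec n"
  shows "(\<exists>y\<in>carrier_vec m. nonneg_vec y \<and> b = transpose_mat A *\<^sub>v y) \<or>
         (\<exists>w\<in>carrier_vec n. nonneg_vec (A *\<^sub>v w) \<and> b \<bullet> w < 0)"
proof (cases "in_row_cone m n (\<lambda>i k. A $$ (i, k)) (($) b)")
  case True
  then obtain l where l: "\<forall>i<m. 0 \<le> l i" "\<forall>k<n. b $ k = (\<Sum>i<m. l i * A $$ (i, k))"
    unfolding in_row_cone_def by blast
  have "b = transpose_mat A *\<^sub>v vec m l"
    using A b l(2) by (intro eq_vecI) (auto simp: scalar_prod_def atLeast0LessThan mult.commute)
  then show ?thesis using l(1) by (auto simp: nonneg_vec_def intro!: bexI[of _ "vec m l"])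
next
  case False
  then obtain w where w: "\<forall>i<m. 0 \<le> dot n (\<lambda>k. A $$ (i, k)) w" "dot n (($) b) w < 0"
    using farkas unfolding has_separating_vector_def by blast
  have "nonneg_vec (A *\<^sub>v vec n w)"
    using A w(1) by (auto simp: nonneg_vec_def scalar_prod_def dot_def atLeast0LessThan)
  moreover have "b \<bullet> vec n w < 0" using w(2) by (simp add: scalar_prod_def dot_def atLeast0LessThan)
  ultimately show ?thesis by (intro disjI2 bexI[of _ "vec n w"]) auto
qed

lemma rank_factorization_mat:
  fixes M :: "real mat"
  assumes M: "M \<in> carrier_mat p q"
  obtains r A B where "A \<in> carrier_mat p r" "B \<in> carrier_mat r q" "M = A * B"
    "inj_on ((*\<^sub>v) A) (carrier_vec r)" "(*\<^sub>v) B ` carrier_vec q = carrier_vec r"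
proof -
  obtain r Af Bf where fac: "\<forall>i<p. \<forall>j<q. M $$ (i, j) = (\<Sum>k<r. Af i k * Bf k j)"
    and inj: "\<forall>w. (\<forall>i<p. dot r (Af i) w = 0) \<longrightarrow> (\<forall>k<r. w k = 0)"
    and surj: "\<forall>w. \<exists>z. \<forall>k<r. dot q (Bf k) z = w k"
    using rank_factorization_exists[of p q "\<lambda>i j. M $$ (i, j)"]
    unfolding is_rank_factorization_def by blast
  define A where "A = mat p r (\<lambda>(i, k). Af i k)"
  define B where "B = mat r q (\<lambda>(k, j). Bf k j)"
  have A: "A \<in> carrier_mat p r" and B: "B \<in> carrier_mat r q" by (simp_all add: A_def B_def)
  have "M = A * B"
    using M fac by (intro eq_matI) (auto simp: A_def B_def scalar_prod_def atLeast0LessThan)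
  moreover have "inj_on ((*\<^sub>v) A) (carrier_vec r)"
  proof (rule inj_onI)
    fix w1 w2 assume w: "w1 \<in> carrier_vec r" "w2 \<in> carrier_vec r" "A *\<^sub>v w1 = A *\<^sub>v w2"
    have "dot r (Af i) (\<lambda>k. w1 $ k - w2 $ k) = (A *\<^sub>v w1) $ i - (A *\<^sub>v w2) $ i" if "i < p" for i
      using A w(1,2) that
      by (simp add: A_def scalar_prod_def atLeast0LessThan dot_def sum_subtractf right_diff_distrib)
    then have "\<forall>k<r. w1 $ k - w2 $ k = 0"
      using inj[rule_format, of "\<lambda>k. w1 $ k - w2 $ k"] w(3) by simp
    then show "w1 = w2" using w(1,2) by (intro eq_vecI) auto
  qed
  moreover have "(*\<^sub>v) B ` carrier_vec q = carrier_vec r"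
  proof
    show "(*\<^sub>v) B ` carrier_vec q \<subseteq> carrier_vec r" using B by auto
    show "carrier_vec r \<subseteq> (*\<^sub>v) B ` carrier_vec q"
    proof
      fix w :: "real vec" assume w: "w \<in> carrier_vec r"
      obtain z where z: "\<forall>k<r. dot q (Bf k) z = w $ k" using surj by blast
      have "(B *\<^sub>v vec q z) $ k = dot q (Bf k) z" if "k < r" for k
        using that by (simp add: B_def scalar_prod_def dot_def atLeast0LessThan)
      then have "w = B *\<^sub>v vec q z" using B w z by (intro eq_vecI) simp_all
      then show "w \<in> (*\<^sub>v) B ` carrier_vec q" by (rule image_eqI) simp
    qed
  qed
  ultimately show ?thesis using that A B by blast
qed

lemma nonneg_mult_mat_vec:
  fixes M :: "real mat"
  assumes "M \<in> carrier_mat p q" "\<forall>i<p. \<forall>j<q. 0 \<le> M $$ (i, j)"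
    and "v \<in> carrier_vec q" "nonneg_vec v"
  shows "nonneg_vec (M *\<^sub>v v)"
  using assms by (auto simp: nonneg_vec_def scalar_prod_def intro!: sum_nonneg)

lemma scalar_prod_nonneg:
  "nonneg_vec u \<Longrightarrow> nonneg_vec v \<Longrightarrow> dim_vec u = dim_vec v \<Longrightarrow> 0 \<le> u \<bullet> v"
  by (auto simp: nonneg_vec_def scalar_prod_def intro!: sum_nonneg)

lemma cone_subset_nonneg_column_span:
  fixes M :: "real mat"
  assumes "M \<in> carrier_mat p q" "\<forall>i<p. \<forall>j<q. 0 \<le> M $$ (i, j)"
  shows "{M *\<^sub>v z | z. z \<in> carrier_vec q \<and> nonneg_vec z}
    \<subseteq> {M *\<^sub>v z | z. z \<in> carrier_vec q} \<inter> {v \<in> carrier_vec p. nonneg_vec v}"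
  using assms nonneg_mult_mat_vec by fastforce

lemma nonneg_column_span_subset_cone_if_slack:
  fixes M :: "real mat"
  assumes slack: "slack_matrix_of_cone M n K" and M: "M \<in> carrier_mat p q"
  shows "{M *\<^sub>v z | z. z \<in> carrier_vec q} \<inter> {v \<in> carrier_vec p. nonneg_vec v}
    \<subseteq> {M *\<^sub>v z | z. z \<in> carrier_vec q \<and> nonneg_vec z}"
proof
  obtain A B where A: "A \<in> carrier_mat p n" and B: "B \<in> carrier_mat n q" and MAB: "M = A * B"
    and polar_subset: "{x \<in> carrier_vec n. nonneg_vec (transpose_mat B *\<^sub>v x)}
      \<subseteq> {transpose_mat A *\<^sub>v y | y. y \<in> carrier_vec p \<and> nonneg_vec y}"
    using slack M unfolding slack_matrix_of_cone_def by auto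
  fix v assume "v \<in> {M *\<^sub>v z | z. z \<in> carrier_vec q} \<inter> {v \<in> carrier_vec p. nonneg_vec v}"
  then obtain z where z: "z \<in> carrier_vec q" "v = M *\<^sub>v z" and nonneg: "nonneg_vec v" by blast
  have Bt: "transpose_mat B \<in> carrier_mat q n" and Bz: "B *\<^sub>v z \<in> carrier_vec n"
    using B z by simp_all
  from farkas_mat[OF Bt Bz]
  show "v \<in> {M *\<^sub>v z | z. z \<in> carrier_vec q \<and> nonneg_vec z}"
  proof (elim disjE bexE conjE)
    fix y assume y: "y \<in> carrier_vec q" "nonneg_vec y" "B *\<^sub>v z = transpose_mat (transpose_mat B) *\<^sub>v y"
    then have "v = M *\<^sub>v y" using A B z MAB by simp
    then show ?thesis using y by blast
  next
    fix u assume u: "u \<in> carrier_vec n" "nonneg_vec (transpose_mat B *\<^sub>v u)" "(B *\<^sub>v z) \<bullet> u < 0"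
    then obtain y where y: "y \<in> carrier_vec p" "nonneg_vec y" "u = transpose_mat A *\<^sub>v y"
      using polar_subset by blast
    have "(B *\<^sub>v z) \<bullet> u = (transpose_mat A *\<^sub>v y) \<bullet> (B *\<^sub>v z)"
      using comm_scalar_prod[OF Bz u(1)] y(3) by simp
    also have "\<dots> = y \<bullet> v"
      using transpose_vec_mult_scalar[OF A Bz y(1)] A B z MAB by simp
    also have "\<dots> \<ge> 0" using M z y nonneg by (intro scalar_prod_nonneg) auto
    finally show ?thesis using u(3) by simp
  qed
qed

lemma polar_subset_row_cone_of_rank_factorization:
  fixes M A B :: "real mat"
  assumes A: "A \<in> carrier_mat p r" and B: "B \<in> carrier_mat r q" and M: "M = A * B"
    and inj: "inj_on ((*\<^sub>v) A) (carrier_vec r)" and surj: "(*\<^sub>v) B ` carrier_vec q = carrier_vec r"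
    and cone: "{M *\<^sub>v z | z. z \<in> carrier_vec q} \<inter> {v \<in> carrier_vec p. nonneg_vec v}
      \<subseteq> {M *\<^sub>v z | z. z \<in> carrier_vec q \<and> nonneg_vec z}"
  shows "{x \<in> carrier_vec r. nonneg_vec (transpose_mat B *\<^sub>v x)}
    \<subseteq> {transpose_mat A *\<^sub>v y | y. y \<in> carrier_vec p \<and> nonneg_vec y}"
proof
  fix x assume "x \<in> {x \<in> carrier_vec r. nonneg_vec (transpose_mat B *\<^sub>v x)}"
  then have x: "x \<in> carrier_vec r" and Bx: "nonneg_vec (transpose_mat B *\<^sub>v x)" by auto
  from farkas_mat[OF A x]
  show "x \<in> {transpose_mat A *\<^sub>v y | y. y \<in> carrier_vec p \<and> nonneg_vec y}"
  proof (elim disjE bexE conjE)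
    fix w assume w: "w \<in> carrier_vec r" "nonneg_vec (A *\<^sub>v w)" "x \<bullet> w < 0"
    then obtain z where z: "z \<in> carrier_vec q" "w = B *\<^sub>v z" using surj by blast
    have Mz: "M *\<^sub>v z = A *\<^sub>v w" using A B M z by simp
    have "M *\<^sub>v z \<in> {M *\<^sub>v z | z. z \<in> carrier_vec q}" using z(1) by blast
    moreover have "M *\<^sub>v z \<in> {v \<in> carrier_vec p. nonneg_vec v}"
      using Mz mult_mat_vec_carrier[OF A w(1)] w(2) by simp
    ultimately have "M *\<^sub>v z \<in> {M *\<^sub>v z | z. z \<in> carrier_vec q \<and> nonneg_vec z}"
      using cone by blast
    then obtain z' where z': "z' \<in> carrier_vec q" "nonneg_vec z'" "A *\<^sub>v w = A *\<^sub>v (B *\<^sub>v z')"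
      using Mz A B M by auto
    have "w = B *\<^sub>v z'" using inj_onD[OF inj z'(3)] w(1) B z'(1) by simp
    then have "x \<bullet> w = (transpose_mat B *\<^sub>v x) \<bullet> z'"
      using B x z'(1) by (simp add: transpose_vec_mult_scalar)
    also have "\<dots> \<ge> 0" using B z' Bx by (intro scalar_prod_nonneg) auto
    finally show ?thesis using w(3) by simp
  qed auto
qed

lemma slack_matrix_of_cone_of_rank_factorization:
  fixes M A B :: "real mat"
  assumes M: "M \<in> carrier_mat p q" and nonneg: "\<forall>i<p. \<forall>j<q. 0 \<le> M $$ (i, j)"
    and A: "A \<in> carrier_mat p r" and B: "B \<in> carrier_mat r q" and MAB: "M = A * B"
    and inj: "inj_on ((*\<^sub>v) A) (carrier_vec r)" and surj: "(*\<^sub>v) B ` carrier_vec q = carrier_vec r"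
    and cone: "{M *\<^sub>v z | z. z \<in> carrier_vec q} \<inter> {v \<in> carrier_vec p. nonneg_vec v}
      \<subseteq> {M *\<^sub>v z | z. z \<in> carrier_vec q \<and> nonneg_vec z}"
  shows "slack_matrix_of_cone M r {x \<in> carrier_vec r. nonneg_vec (transpose_mat B *\<^sub>v x)}"
proof -
  have "transpose_mat B *\<^sub>v (transpose_mat A *\<^sub>v y) = transpose_mat M *\<^sub>v y"
    if "y \<in> carrier_vec p" for y
    using A B MAB that by (simp add: transpose_mult[OF A B])
  moreover have "nonneg_vec (transpose_mat M *\<^sub>v y)" if "y \<in> carrier_vec p" "nonneg_vec y" for y
    using M nonneg that by (intro nonneg_mult_mat_vec[of _ q p]) auto
  ultimately have "{transpose_mat A *\<^sub>v y | y. y \<in> carrier_vec p \<and> nonneg_vec y}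
    \<subseteq> {x \<in> carrier_vec r. nonneg_vec (transpose_mat B *\<^sub>v x)}"
    using A by auto
  then show ?thesis
    using polar_subset_row_cone_of_rank_factorization[OF A B MAB inj surj cone] M A B MAB
    unfolding slack_matrix_of_cone_def by (intro exI[of _ A] exI[of _ B]) auto
qed

theorem corollary2p3:
  fixes M :: "real mat" and p q :: nat
  assumes "M \<in> carrier_mat p q"
    and "\<forall>i < p. \<forall>j < q. M $$ (i, j) \<ge> 0"
  shows "is_slack_matrix_of_polyhedral_cone M \<longleftrightarrow>
    {M *\<^sub>v z | z. z \<in> carrier_vec q \<and> nonneg_vec z} =
    {M *\<^sub>v z | z. z \<in> carrier_vec q} \<inter> {v \<in> carrier_vec p. nonneg_vec v}"
proof
  assume "is_slack_matrix_of_polyhedral_cone M"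
  then obtain n K where "slack_matrix_of_cone M n K"
    unfolding is_slack_matrix_of_polyhedral_cone_def by blast
  then show "{M *\<^sub>v z | z. z \<in> carrier_vec q \<and> nonneg_vec z} =
    {M *\<^sub>v z | z. z \<in> carrier_vec q} \<inter> {v \<in> carrier_vec p. nonneg_vec v}"
    using nonneg_column_span_subset_cone_if_slack cone_subset_nonneg_column_span assms by blast
next
  assume cone: "{M *\<^sub>v z | z. z \<in> carrier_vec q \<and> nonneg_vec z} =
    {M *\<^sub>v z | z. z \<in> carrier_vec q} \<inter> {v \<in> carrier_vec p. nonneg_vec v}"
  obtain r A B where "A \<in> carrier_mat p r" "B \<in> carrier_mat r q" "M = A * B"
    "inj_on ((*\<^sub>v) A) (carrier_vec r)" "(*\<^sub>v) B ` carrier_vec q = carrier_vec r"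
    using rank_factorization_mat[OF assms(1)] .
  then have "slack_matrix_of_cone M r {x \<in> carrier_vec r. nonneg_vec (transpose_mat B *\<^sub>v x)}"
    using slack_matrix_of_cone_of_rank_factorization[OF assms] cone by blast
  then show "is_slack_matrix_of_polyhedral_cone M"
    unfolding is_slack_matrix_of_polyhedral_cone_def by blast
qed

end
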